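(* Let $\mathbf{F}$ be a field of characteristic $2$, $m\ge1$, and let $A\in\{0,1\}^m$ with $|A|\ge 3$. Then $$\sum_{0<L<A} x^{A-L}\,\mathrm{Tr}(L)\in\ker(\pi).$$ Moreover, let $i=\ell(A)$ and $j=\ell(A')$. Then for every $L$ with $0<L<A$, $$\mathrm{LT}\big(\pi(x^{A-L}\mathrm{Tr}(L))\big)\le x_i x_j\, y^{(A')'}$$ (in the graded reverse lexicographic order with $y_1>x_1>y_2>x_2>\cdots>y_m>x_m$), with equality if and only if $A-L=\Delta_i$ or $A-L=\Delta_j$.
   Context: Let $S=\mathbf{F}[x_1,y_1,\dots,x_m,y_m]$ with the $\mathbf{F}$-algebra automorphism $\sigma(x_i)=x_i$, $\sigma(y_i)=y_i+x_i$ of order 2, and let $S^{C_2}$ be the ring of $\sigma$-invariants. For $A=(a_1,\dots,a_m)\in\mathbb{N}^m$ write $x^A=\prod_s x_s^{a_s}$, $y^A=\prod_s y_s^{a_s}$, $N^A=\prod_s N_s^{a_s}$ where $N_s=y_s^2+x_sy_s$, and $|A|=\sum_s a_s$. $A\le B$ means componentwise $\le$; $L<A$ means $L\le A$, $L\ne A$. $\Delta_s$ is the sequence with $1$ in position $s$ and $0$ elsewhere. For $A\in\{0,1\}^m$, $\mathrm{tr}(A)=y^A+\prod_s(y_s+x_s)^{a_s}\in S^{C_2}$. For $A\ne0$, $\ell(A)=\min\{\ell:a_\ell=1\}$ and $A'$ is $A$ with the entry at position $\ell(A)$ set to $0$. Let $R=\mathbf{F}[x_1,\dots,x_m,N_1,\dots,N_m]$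 be a polynomial ring in $2m$ indeterminates and $Q=R[\mathrm{Tr}(A): A\in\{0,1\}^m, |A|\ge2]$ a polynomial ring over $R$ in the indeterminates $\mathrm{Tr}(A)$. Let $\pi:Q\to S^{C_2}$ be the $\mathbf{F}$-algebra homomorphism with $\pi(x_i)=x_i$, $\pi(N_i)=y_i^2+x_iy_i$, $\pi(\mathrm{Tr}(A))=\mathrm{tr}(A)$. Convention: for $C\in\{0,1\}^m$ with $|C|\le 1$, $\mathrm{Tr}(C)$ denotes the element of $Q$ given by $\mathrm{Tr}(0)=0$ and $\mathrm{Tr}(\Delta_s)=x_s$ (so that $\pi(\mathrm{Tr}(C))=\mathrm{tr}(C)$ for all $C\in\{0,1\}^m$). $\mathrm{LT}$ denotes the lead term. *)

theory Defs
  imports Main "HOL-Library.Poly_Mapping"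
begin

text \<open>A polynomial over a coefficient ring 'a in variables of type 'v is an element of
  the type of finitely supported maps from monomials to coefficients (monomial = exponent vector, mapped to its coefficient);
  ring operations are those of HOL-Library.Poly_Mapping (convolution product).\<close>

type_synonym ('v, 'a) mpoly = "('v \<Rightarrow>\<^sub>0 nat) \<Rightarrow>\<^sub>0 'a"

definition Var :: "'v \<Rightarrow> ('v, 'a::comm_semiring_1) mpoly" where
  "Var v = Poly_Mapping.single (Poly_Mapping.single v 1) 1"

definition Const :: "'a::comm_semiring_1 \<Rightarrow> ('v, 'a) mpoly" where
  "Const c = Poly_Mapping.single 0 c"

definition subst_hom :: "('v \<Rightarrow> ('w, 'a::comm_semiring_1) mpoly) \<Rightarrow> ('v, 'a) mpoly \<Rightarrow> ('w, 'a) mpoly" where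
  "subst_hom f p = (\<Sum>mu\<in>Poly_Mapping.keys p. Const (Poly_Mapping.lookup p mu) * prod (\<lambda>v. f v ^ Poly_Mapping.lookup mu v) (Poly_Mapping.keys mu))"

datatype svar = SX nat | SY nat

abbreviation xS :: "nat \<Rightarrow> (svar, 'a::comm_semiring_1) mpoly" where "xS i \<equiv> Var (SX i)"
abbreviation yS :: "nat \<Rightarrow> (svar, 'a::comm_semiring_1) mpoly" where "yS i \<equiv> Var (SY i)"

text \<open>Subsets A of {1..m} encode the 0/1-sequences A in {0,1}^m (A = support).
  tr(A) = y^A + prod_s (y_s + x_s)^{a_s}.\<close>
definition tr :: "nat set \<Rightarrow> (svar, 'a::comm_semiring_1) mpoly" where
  "tr A = (\<Prod>s\<in>A. yS s) + (\<Prod>s\<in>A. yS s + xS s)"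

datatype qvar = QX nat | QN nat | QT "nat set"

text \<open>Tr(C) in Q, with the convention Tr(0) = 0 and Tr(Delta_s) = x_s.\<close>
definition TrQ :: "nat set \<Rightarrow> (qvar, 'a::comm_semiring_1) mpoly" where
  "TrQ C = (if C = {} then 0 else if card C = 1 then Var (QX (the_elem C)) else Var (QT C))"

definition pi_img :: "qvar \<Rightarrow> (svar, 'a::comm_semiring_1) mpoly" where
  "pi_img v = (case v of QX i \<Rightarrow> xS i | QN i \<Rightarrow> yS i ^ 2 + xS i * yS i | QT A \<Rightarrow> tr A)"

definition piQ :: "(qvar, 'a::comm_semiring_1) mpoly \<Rightarrow> (svar, 'a) mpoly" where
  "piQ = subst_hom pi_img"

text \<open>rank: a larger rank means a smaller variable.\<close>
fun rank :: "svar \<Rightarrow> nat" where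
  "rank (SY i) = 2 * i"
| "rank (SX i) = 2 * i + 1"

definition deg :: "(svar \<Rightarrow>\<^sub>0 nat) \<Rightarrow> nat" where
  "deg \<alpha> = (\<Sum>v\<in>Poly_Mapping.keys \<alpha>. Poly_Mapping.lookup \<alpha> v)"

text \<open>grevlex_less b a: monomial b is strictly smaller than a. Equal degree: compare at the
  smallest variable where they differ; the one with the smaller exponent there is larger.\<close>
definition grevlex_less :: "(svar \<Rightarrow>\<^sub>0 nat) \<Rightarrow> (svar \<Rightarrow>\<^sub>0 nat) \<Rightarrow> bool" where
  "grevlex_less \<beta> \<alpha> \<longleftrightarrow> deg \<beta> < deg \<alpha> \<or>
     (deg \<beta> = deg \<alpha> \<and> (\<exists>v. Poly_Mapping.lookup \<alpha> v < Poly_Mapping.lookup \<beta> v \<and>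
        (\<forall>w. rank v < rank w \<longrightarrow> Poly_Mapping.lookup \<alpha> w = Poly_Mapping.lookup \<beta> w)))"

definition grevlex_le :: "(svar \<Rightarrow>\<^sub>0 nat) \<Rightarrow> (svar \<Rightarrow>\<^sub>0 nat) \<Rightarrow> bool" where
  "grevlex_le \<beta> \<alpha> \<longleftrightarrow> \<beta> = \<alpha> \<or> grevlex_less \<beta> \<alpha>"

definition LM :: "(svar, 'a::zero) mpoly \<Rightarrow> (svar \<Rightarrow>\<^sub>0 nat)" where
  "LM p = (THE \<alpha>. \<alpha> \<in> Poly_Mapping.keys p \<and> (\<forall>\<beta>\<in>Poly_Mapping.keys p. grevlex_le \<beta> \<alpha>))"

definition LT :: "(svar, 'a::zero) mpoly \<Rightarrow> (svar, 'a) mpoly" where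
  "LT p = Poly_Mapping.single (LM p) (Poly_Mapping.lookup p (LM p))"

definition xmon :: "nat set \<Rightarrow> (svar \<Rightarrow>\<^sub>0 nat)" where
  "xmon C = (\<Sum>s\<in>C. Poly_Mapping.single (SX s) 1)"
definition ymon :: "nat set \<Rightarrow> (svar \<Rightarrow>\<^sub>0 nat)" where
  "ymon C = (\<Sum>s\<in>C. Poly_Mapping.single (SY s) 1)"

definition ell :: "nat set \<Rightarrow> nat" where "ell A = Min A"
definition prime_set :: "nat set \<Rightarrow> nat set" where "prime_set A = A - {ell A}"

end

theory Submission
  imports Defs
begin

text \<open>In characteristic 2, summing x^(A-L) tr(L) over all L \<subseteq> A and expanding both products
  in tr(L) = y^L + \<Prod>(y_s + x_s) gives \<Prod>(y_s + x_s) + \<Prod>(y_s + 2x_s) = tr(A). The term L = A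
  is tr(A) itself and the term L = {} is tr({}) = 1 + 1 = 0, so the remaining terms cancel.

  Expanding tr(L) the same way, x^(A-L) tr(L) is the sum of the distinct squarefree monomials
  x^(A-T) y^T over T \<subset> L, all of degree |A|. Two of them are compared in grevlex at the
  largest index s where T and T' differ, and the one with y_s beats the one with x_s. Hence the
  lead monomial comes from T = L - {min L}, and among these sets A - {i, j} is the largest one,
  reached exactly for L = A - {i} and L = A - {j}.\<close>

lemma subst_hom_zero [simp]: "subst_hom f 0 = 0"
  by (simp add: subst_hom_def)

lemma subst_hom_add: "subst_hom f (p + q) = subst_hom f p + subst_hom f q"
  unfolding subst_hom_def
  by (rule setsum_keys_plus_distrib) (simp_all add: Const_def single_add distrib_right)

lemma subst_hom_sum: "subst_hom f (sum g X) = (\<Sum>x\<in>X. subst_hom f (g x))"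
  by (induction X rule: infinite_finite_induct) (simp_all add: subst_hom_add)

lemma prod_single:
  "(\<Prod>b\<in>B. Poly_Mapping.single (k b) (c b)) = Poly_Mapping.single (\<Sum>b\<in>B. k b) (\<Prod>b\<in>B. c b)"
  by (induction B rule: infinite_finite_induct) (simp_all add: mult_single)

definition indicator_pm :: "'v set \<Rightarrow> ('v \<Rightarrow>\<^sub>0 'b::{comm_monoid_add,zero_neq_one})" where
  "indicator_pm W = (\<Sum>v\<in>W. Poly_Mapping.single v 1)"

lemma lookup_indicator_pm:
  "finite W \<Longrightarrow> Poly_Mapping.lookup (indicator_pm W) v = (if v \<in> W then 1 else 0)"
  unfolding indicator_pm_def lookup_sum lookup_single when_def by simp

lemma keys_indicator_pm: "finite W \<Longrightarrow> Poly_Mapping.keys (indicator_pm W) = W"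
  by (auto simp: in_keys_iff lookup_indicator_pm split: if_splits)

lemma deg_indicator_pm: "finite W \<Longrightarrow> deg (indicator_pm W) = card W"
  by (simp add: deg_def keys_indicator_pm lookup_indicator_pm)

lemma indicator_pm_Un:
  "finite U \<Longrightarrow> finite V \<Longrightarrow> U \<inter> V = {} \<Longrightarrow> indicator_pm (U \<union> V) = indicator_pm U + indicator_pm V"
  unfolding indicator_pm_def by (rule sum.union_disjoint)

lemma sum_single_one_inj_on:
  "finite F \<Longrightarrow> inj_on g F \<Longrightarrow> (\<Sum>T\<in>F. Poly_Mapping.single (g T) 1) = indicator_pm (g ` F)"
  by (simp add: indicator_pm_def sum.reindex)

lemma prod_Var: "(\<Prod>v\<in>W. Var v) = (Poly_Mapping.single (indicator_pm W) 1 :: ('v,'a::comm_semiring_1) mpoly)"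
  by (simp add: Var_def prod_single indicator_pm_def)

lemma subst_hom_prod_Var:
  fixes W :: "'v set"
  assumes "finite W"
  shows "subst_hom f (\<Prod>v\<in>W. Var v) = (\<Prod>v\<in>W. f v)"
proof -
  have "subst_hom f (\<Prod>v\<in>W. Var v) = (\<Prod>v\<in>W. f v ^ Poly_Mapping.lookup (indicator_pm W :: 'v \<Rightarrow>\<^sub>0 nat) v)"
    using assms by (simp add: prod_Var subst_hom_def Const_def keys_indicator_pm)
  also have "\<dots> = (\<Prod>v\<in>W. f v)"
    using assms by (intro prod.cong) (simp_all add: lookup_indicator_pm)
  finally show ?thesis .
qed

lemma prod_xS_prod_yS:
  "(\<Prod>s\<in>C. xS s) * (\<Prod>s\<in>T. yS s) = (Poly_Mapping.single (xmon C + ymon T) 1 :: (svar,'a::comm_semiring_1) mpoly)"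
  by (simp add: Var_def prod_single xmon_def ymon_def mult_single)

lemma CHAR_2_add_self:
  assumes "CHAR('a::comm_semiring_1) = 2"
  shows "(p::('v,'a) mpoly) + p = 0"
proof -
  have "(2::'a) = 0" using of_nat_CHAR[where 'a='a] assms by simp
  then have "c + c = 0" for c :: 'a by (metis mult_2 mult_zero_left)
  then show ?thesis by (intro poly_mapping_eqI) (simp only: lookup_add lookup_zero)
qed

lemma tr_empty: "CHAR('a::comm_semiring_1) = 2 \<Longrightarrow> (tr {} :: (svar,'a) mpoly) = 0"
  by (simp only: tr_def prod.empty CHAR_2_add_self)

lemma tr_singleton:
  assumes "CHAR('a::comm_semiring_1) = 2"
  shows "(tr {l} :: (svar,'a) mpoly) = xS l"
proof -
  have "(tr {l} :: (svar,'a) mpoly) = (yS l + yS l) + xS l" by (simp add: tr_def add.assoc)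
  then show ?thesis using assms by (simp add: CHAR_2_add_self)
qed

lemma piQ_prod_QX_times_Var:
  assumes "finite B" "w \<notin> QX ` B"
  shows "piQ ((\<Prod>s\<in>B. Var (QX s)) * Var w :: (qvar,'a::comm_semiring_1) mpoly) = (\<Prod>s\<in>B. xS s) * pi_img w"
proof -
  have "(\<Prod>s\<in>B. Var (QX s)) * Var w = (\<Prod>v\<in>insert w (QX ` B). Var v :: (qvar,'a) mpoly)"
    using assms by (simp add: prod.reindex inj_on_def mult.commute)
  also have "piQ \<dots> = (\<Prod>v\<in>insert w (QX ` B). pi_img v)"
    using assms by (simp only: piQ_def subst_hom_prod_Var finite_insert finite_imageI)
  also have "\<dots> = pi_img w * (\<Prod>v\<in>QX ` B. pi_img v)"
    using assms by simp
  also have "(\<Prod>v\<in>QX ` B. pi_img v) = (\<Prod>s\<in>B. xS s :: (svar,'a) mpoly)"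
    by (simp add: prod.reindex inj_on_def pi_img_def)
  finally show ?thesis by (simp add: mult.commute)
qed

lemma piQ_prod_QX_times_TrQ:
  assumes "CHAR('a::comm_semiring_1) = 2" "finite B" "B \<inter> L = {}"
  shows "piQ ((\<Prod>s\<in>B. Var (QX s)) * TrQ L :: (qvar,'a) mpoly) = (\<Prod>s\<in>B. xS s) * tr L"
proof -
  consider "L = {}" | l where "L = {l}" | "L \<noteq> {}" "card L \<noteq> 1"
    by (metis card_1_singletonE)
  then show ?thesis
  proof cases
    case 1
    then show ?thesis using assms(1) by (simp add: TrQ_def piQ_def tr_empty)
  next
    case 2
    then have "QX l \<notin> QX ` B" using assms(3) by auto
    then show ?thesis
      using 2 assms by (simp add: TrQ_def piQ_prod_QX_times_Var pi_img_def tr_singleton)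
  next
    case 3
    have "QT L \<notin> QX ` B" by auto
    then show ?thesis using 3 assms by (simp add: TrQ_def piQ_prod_QX_times_Var pi_img_def)
  qed
qed

definition xy_mon :: "nat set \<Rightarrow> nat set \<Rightarrow> svar \<Rightarrow>\<^sub>0 nat" where
  "xy_mon A T = xmon (A - T) + ymon T"

lemma tr_eq_sum_proper_subsets:
  assumes "CHAR('a::comm_semiring_1) = 2" "finite L"
  shows "(tr L :: (svar,'a) mpoly) = (\<Sum>T\<in>Pow L - {L}. (\<Prod>s\<in>T. yS s) * (\<Prod>s\<in>L - T. xS s))"
proof -
  have "(tr L :: (svar,'a) mpoly) = (\<Prod>s\<in>L. yS s) + (\<Sum>T\<in>Pow L. (\<Prod>s\<in>T. yS s) * (\<Prod>s\<in>L - T. xS s))"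
    unfolding tr_def using assms(2) by (simp add: prod_add)
  also have "(\<Sum>T\<in>Pow L. (\<Prod>s\<in>T. yS s) * (\<Prod>s\<in>L - T. xS s)) =
      (\<Prod>s\<in>L. yS s) + (\<Sum>T\<in>Pow L - {L}. (\<Prod>s\<in>T. yS s) * (\<Prod>s\<in>L - T. xS s :: (svar,'a) mpoly))"
    using assms(2) by (subst sum.remove[of _ L]) auto
  finally show ?thesis using assms(1) by (simp add: add.assoc[symmetric] CHAR_2_add_self)
qed

lemma prod_xS_times_tr:
  assumes "CHAR('a::comm_semiring_1) = 2" "finite A" "L \<subseteq> A"
  shows "(\<Prod>s\<in>A - L. xS s) * (tr L :: (svar,'a) mpoly) =
    (\<Sum>T\<in>Pow L - {L}. Poly_Mapping.single (xy_mon A T) 1)"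
proof -
  have fL: "finite L" using assms finite_subset by blast
  have "(\<Prod>s\<in>A - L. xS s) * ((\<Prod>s\<in>T. yS s) * (\<Prod>s\<in>L - T. xS s)) =
      (Poly_Mapping.single (xy_mon A T) 1 :: (svar,'a) mpoly)" if "T \<subseteq> L" for T
  proof -
    have "(\<Prod>s\<in>A - L. xS s) * (\<Prod>s\<in>L - T. xS s) = (\<Prod>s\<in>(A - L) \<union> (L - T). xS s :: (svar,'a) mpoly)"
      using assms(2) fL by (intro prod.union_disjoint[symmetric]) auto
    also have "(A - L) \<union> (L - T) = A - T" using that assms(3) by auto
    finally have x_part: "(\<Prod>s\<in>A - L. xS s) * (\<Prod>s\<in>L - T. xS s) = (\<Prod>s\<in>A - T. xS s :: (svar,'a) mpoly)" .
    have "(\<Prod>s\<in>A - L. xS s) * ((\<Prod>s\<in>T. yS s) * (\<Prod>s\<in>L - T. xS s)) =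
        (\<Prod>s\<in>A - L. xS s) * (\<Prod>s\<in>L - T. xS s) * (\<Prod>s\<in>T. yS s :: (svar,'a) mpoly)"
      by (simp only: ac_simps)
    then show ?thesis by (simp only: x_part prod_xS_prod_yS xy_mon_def)
  qed
  then show ?thesis
    by (simp add: tr_eq_sum_proper_subsets[OF assms(1) fL] sum_distrib_left)
qed

lemma sum_proper_subsets_prod_xS_times_tr_eq_0:
  assumes "CHAR('a::comm_semiring_1) = 2" "finite A" "A \<noteq> {}"
  shows "(\<Sum>L | L \<subset> A \<and> L \<noteq> {}. (\<Prod>s\<in>A - L. xS s) * (tr L :: (svar,'a) mpoly)) = 0"
proof -
  let ?R = "{L. L \<subset> A \<and> L \<noteq> {}}"
  let ?t = "\<lambda>L. (\<Prod>s\<in>A - L. xS s) * (tr L :: (svar,'a) mpoly)"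
  have "(\<Sum>L\<in>Pow A. ?t L) = (\<Sum>L\<in>Pow A. (\<Prod>s\<in>L. yS s) * (\<Prod>s\<in>A - L. xS s))
      + (\<Sum>L\<in>Pow A. (\<Prod>s\<in>L. yS s + xS s) * (\<Prod>s\<in>A - L. xS s))"
    by (simp add: tr_def algebra_simps sum.distrib)
  also have "\<dots> = (\<Prod>s\<in>A. yS s + xS s) + (\<Prod>s\<in>A. (yS s + xS s) + xS s)"
    using assms(2) by (simp add: prod_add)
  also have "(\<Prod>s\<in>A. (yS s + xS s) + xS s) = (\<Prod>s\<in>A. yS s :: (svar,'a) mpoly)"
    using assms(1) by (simp add: add.assoc CHAR_2_add_self)
  finally have "(\<Sum>L\<in>Pow A. ?t L) = ?t A" by (simp add: tr_def add.commute)
  moreover have "Pow A = insert A (insert {} ?R)" by auto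
  moreover have "finite ?R" using assms(2) by (auto intro: finite_subset[of _ "Pow A"])
  ultimately have "tr A + (\<Sum>L\<in>?R. ?t L) = tr A" using assms by (simp add: tr_empty)
  then have "(\<Sum>L\<in>?R. ?t L) + (tr A + tr A) = tr A + tr A" by (simp add: ac_simps)
  then show ?thesis using assms(1) by (simp add: CHAR_2_add_self)
qed

lemma rank_inj: "rank v = rank w \<Longrightarrow> v = w"
  by (cases v; cases w) (simp_all, presburger+)

lemma grevlex_antisym:
  assumes "grevlex_le a b" "grevlex_le b a"
  shows "a = b"
proof (rule ccontr)
  assume "a \<noteq> b"
  then have ab: "grevlex_less a b" and ba: "grevlex_less b a"
    using assms by (auto simp: grevlex_le_def)
  then have "deg a = deg b" by (auto simp: grevlex_less_def)
  with ab ba obtain v u where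
    v: "Poly_Mapping.lookup b v < Poly_Mapping.lookup a v"
       "\<forall>w. rank v < rank w \<longrightarrow> Poly_Mapping.lookup b w = Poly_Mapping.lookup a w" and
    u: "Poly_Mapping.lookup a u < Poly_Mapping.lookup b u"
       "\<forall>w. rank u < rank w \<longrightarrow> Poly_Mapping.lookup a w = Poly_Mapping.lookup b w"
    by (auto simp: grevlex_less_def)
  consider "rank v < rank u" | "rank u < rank v" | "u = v"
    using rank_inj linorder_neqE_nat by blast
  then show False
    by cases (use u v in force)+
qed

lemma LM_eqI:
  assumes "\<alpha> \<in> Poly_Mapping.keys p" "\<And>\<beta>. \<beta> \<in> Poly_Mapping.keys p \<Longrightarrow> grevlex_le \<beta> \<alpha>"
  shows "LM p = \<alpha>"
  unfolding LM_def using assms grevlex_antisym by (intro the_equality) blast+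

lemma xmon_eq_indicator_pm: "xmon C = indicator_pm (SX ` C)"
  by (simp add: xmon_def indicator_pm_def sum.reindex inj_on_def)

lemma ymon_eq_indicator_pm: "ymon C = indicator_pm (SY ` C)"
  by (simp add: ymon_def indicator_pm_def sum.reindex inj_on_def)

lemma xy_mon_eq_indicator_pm:
  assumes "finite A" "T \<subseteq> A"
  shows "xy_mon A T = indicator_pm (SX ` (A - T) \<union> SY ` T)"
proof -
  have "finite T" using assms finite_subset by blast
  then show ?thesis
    using assms(1) unfolding xy_mon_def xmon_eq_indicator_pm ymon_eq_indicator_pm
    by (intro indicator_pm_Un[symmetric]) auto
qed

lemma
  assumes "finite A" "T \<subseteq> A"
  shows lookup_xy_mon_SX: "Poly_Mapping.lookup (xy_mon A T) (SX s) = (if s \<in> A - T then 1 else 0)"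
    and lookup_xy_mon_SY: "Poly_Mapping.lookup (xy_mon A T) (SY s) = (if s \<in> T then 1 else 0)"
proof -
  have "finite (SX ` (A - T) \<union> SY ` T)" using assms finite_subset by blast
  then show "Poly_Mapping.lookup (xy_mon A T) (SX s) = (if s \<in> A - T then 1 else 0)"
    and "Poly_Mapping.lookup (xy_mon A T) (SY s) = (if s \<in> T then 1 else 0)"
    using assms by (auto simp: xy_mon_eq_indicator_pm lookup_indicator_pm)
qed

lemma deg_xy_mon:
  assumes "finite A" "T \<subseteq> A"
  shows "deg (xy_mon A T) = card A"
proof -
  have "finite T" using assms finite_subset by blast
  have "card (SX ` (A - T) \<union> SY ` T) = card (A - T) + card T"
    using assms \<open>finite T\<close> by (subst card_Un_disjoint) (auto simp: card_image inj_on_def)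
  also have "\<dots> = card A"
    using assms \<open>finite T\<close> by (simp add: card_Diff_subset card_mono)
  finally show ?thesis
    using assms \<open>finite T\<close> by (simp add: xy_mon_eq_indicator_pm deg_indicator_pm)
qed

lemma inj_on_xy_mon: "finite A \<Longrightarrow> inj_on (xy_mon A) (Pow A)"
proof (rule inj_onI, rule set_eqI)
  fix T T' s
  assume "finite A" "T \<in> Pow A" "T' \<in> Pow A" "xy_mon A T = xy_mon A T'"
  then have "Poly_Mapping.lookup (xy_mon A T) (SY s) = Poly_Mapping.lookup (xy_mon A T') (SY s)"
    by simp
  then show "s \<in> T \<longleftrightarrow> s \<in> T'"
    using \<open>finite A\<close> \<open>T \<in> Pow A\<close> \<open>T' \<in> Pow A\<close> by (simp add: lookup_xy_mon_SY split: if_splits)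
qed

lemma grevlex_less_xy_mon:
  assumes A: "finite A" "T \<subseteq> A" "T' \<subseteq> A"
    and "T \<noteq> T'" and s_in: "Max (sym_diff T T') \<in> T'"
  shows "grevlex_less (xy_mon A T) (xy_mon A T')"
proof -
  let ?s = "Max (sym_diff T T')"
  have fin: "finite (sym_diff T T')" using A finite_subset by blast
  have "?s \<in> sym_diff T T'" using fin \<open>T \<noteq> T'\<close> by (intro Max_in) auto
  then have "?s \<notin> T" using s_in by blast
  have agree: "t \<in> T \<longleftrightarrow> t \<in> T'" if "?s < t" for t
  proof (rule ccontr)
    assume "\<not> (t \<in> T \<longleftrightarrow> t \<in> T')"
    then have "t \<le> ?s" using fin by (intro Max_ge) auto
    then show False using that by simp
  qed
  \<comment> \<open>\<open>x\<^sub>s\<close> is the smallest variable in which the two monomials differ\<close>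
  have "Poly_Mapping.lookup (xy_mon A T') (SX ?s) < Poly_Mapping.lookup (xy_mon A T) (SX ?s)"
    using A s_in \<open>?s \<notin> T\<close> by (auto simp: lookup_xy_mon_SX)
  moreover have "Poly_Mapping.lookup (xy_mon A T') w = Poly_Mapping.lookup (xy_mon A T) w"
    if "rank (SX ?s) < rank w" for w
    using that A agree by (cases w) (auto simp: lookup_xy_mon_SX lookup_xy_mon_SY)
  ultimately show ?thesis
    unfolding grevlex_less_def using A by (auto simp: deg_xy_mon)
qed

lemma Max_sym_diff_prime_set:
  assumes "finite L" "T \<subset> L" "T \<noteq> prime_set L"
  shows "Max (sym_diff T (prime_set L)) \<in> prime_set L"
proof -
  define l0 where "l0 = Min L"
  define D where "D = sym_diff T (prime_set L)"
  have L': "prime_set L = L - {l0}" by (simp add: prime_set_def ell_def l0_def)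
  have "finite D" using assms by (auto simp: D_def L' intro: finite_subset)
  moreover have "D \<noteq> {}" using assms(3) by (auto simp: D_def)
  ultimately have "Max D \<in> D" by simp
  moreover have "Max D \<noteq> l0"
  proof (cases "l0 \<in> T")
    case True
    obtain t where t: "t \<in> L" "t \<notin> T" using assms(2) by auto
    have "l0 \<le> t" using t(1) assms(1) by (simp add: l0_def)
    moreover have "t \<noteq> l0" using True t(2) by blast
    ultimately have "l0 < t" by simp
    moreover have "t \<le> Max D" using t True \<open>finite D\<close> by (intro Max_ge) (auto simp: D_def L')
    ultimately show ?thesis by simp
  next
    case False
    then show ?thesis using \<open>Max D \<in> D\<close> by (auto simp: D_def L')
  qed
  ultimately show ?thesis using assms(2) by (auto simp: D_def L')
qed

lemma two_least_elements:
  assumes "finite A" "card A \<ge> 2"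
  defines "i \<equiv> ell A" and "j \<equiv> ell (prime_set A)"
  shows "i \<in> A" "j \<in> A" "i < j" "\<And>x. x \<in> A \<Longrightarrow> i \<le> x" "\<And>x. x \<in> A \<Longrightarrow> x \<noteq> i \<Longrightarrow> j \<le> x"
    "prime_set (prime_set A) = A - {i, j}"
proof -
  have "A \<noteq> {}" using assms(2) by auto
  then show iA: "i \<in> A" and i_le: "\<And>x. x \<in> A \<Longrightarrow> i \<le> x"
    using assms(1) by (simp_all add: i_def ell_def)
  have "card (A - {i}) \<ge> 1" using assms(1,2) iA by (simp add: card_Diff_singleton)
  then have "A - {i} \<noteq> {}" by (metis card.empty not_one_le_zero)
  have j_eq: "j = Min (A - {i})" by (simp add: j_def ell_def prime_set_def i_def)
  have "j \<in> A - {i}" unfolding j_eq using assms(1) \<open>A - {i} \<noteq> {}\<close> by (intro Min_in) auto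
  moreover have j_le: "j \<le> x" if "x \<in> A - {i}" for x unfolding j_eq using assms(1) that by (intro Min_le) auto
  ultimately show "j \<in> A" "\<And>x. x \<in> A \<Longrightarrow> x \<noteq> i \<Longrightarrow> j \<le> x" by auto
  show "i < j" using \<open>j \<in> A - {i}\<close> i_le[of j] by auto
  show "prime_set (prime_set A) = A - {i, j}"
    by (auto simp: prime_set_def i_def j_def)
qed

lemma card_ge_2_if_proper_nonempty:
  assumes "finite A" "L \<subset> A" "L \<noteq> {}"
  shows "card A \<ge> 2"
proof -
  obtain l k where "l \<in> L" "k \<in> A - L" using assms(2,3) by blast
  then have "card {l, k} \<le> card A" using assms(1,2) by (intro card_mono) auto
  moreover have "l \<noteq> k" using \<open>l \<in> L\<close> \<open>k \<in> A - L\<close> by blast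
  ultimately show ?thesis by simp
qed

context
  fixes A L :: "nat set"
  assumes fin: "finite A" and L: "L \<subset> A" "L \<noteq> {}"
begin

private abbreviation (input) "i \<equiv> ell A"
private abbreviation (input) "j \<equiv> ell (prime_set A)"

lemma Max_sym_diff_prime_set_prime_set:
  assumes "prime_set L \<noteq> prime_set (prime_set A)"
  shows "Max (sym_diff (prime_set L) (prime_set (prime_set A))) \<in> prime_set (prime_set A)"
proof -
  note ij = two_least_elements[OF fin card_ge_2_if_proper_nonempty[OF fin L]]
  define l0 where "l0 = Min L"
  define D where "D = sym_diff (prime_set L) (A - {i, j})"
  have L': "prime_set L = L - {l0}" by (simp add: prime_set_def ell_def l0_def)
  have "finite L" using fin L(1) finite_subset by blast
  then have "l0 \<in> L" using L(2) by (simp add: l0_def)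
  have "finite D" using fin L by (auto simp: D_def L' intro: finite_subset)
  moreover have "D \<noteq> {}" using assms ij(6) by (auto simp: D_def)
  ultimately have "Max D \<in> D" by simp
  \<comment> \<open>as \<open>D \<subseteq> A\<close>, its maximum lies in \<open>A - {i, j}\<close> as soon as it is neither \<open>i\<close> nor \<open>j\<close>\<close>
  moreover have "Max D \<noteq> i \<and> Max D \<noteq> j"
  proof (cases "j \<in> prime_set L")
    case True
    then have "j \<in> L" "j \<noteq> l0" by (auto simp: L')
    moreover have "l0 \<le> j" using \<open>finite L\<close> \<open>j \<in> L\<close> by (simp add: l0_def)
    ultimately have "l0 < j" by simp
    then have "l0 = i" using ij(5) \<open>l0 \<in> L\<close> L(1) by force
    obtain k where k: "k \<in> A" "k \<notin> L" using L(1) by auto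
    then have "k \<noteq> i" "k \<noteq> j" using \<open>l0 = i\<close> \<open>l0 \<in> L\<close> True by (auto simp: L')
    then have "j < k" using ij(5)[OF k(1)] by simp
    moreover have "k \<le> Max D"
      using k \<open>k \<noteq> i\<close> \<open>k \<noteq> j\<close> \<open>finite D\<close> by (intro Max_ge) (auto simp: D_def L')
    ultimately show ?thesis using ij(3) by simp
  next
    case False
    have "i \<notin> prime_set L"
    proof
      assume "i \<in> prime_set L"
      then have "i \<in> L" "i \<noteq> l0" by (auto simp: L')
      moreover have "l0 \<le> i" using \<open>finite L\<close> \<open>i \<in> L\<close> by (simp add: l0_def)
      moreover have "i \<le> l0" using ij(4) \<open>l0 \<in> L\<close> L(1) by blast
      ultimately show False by simp
    qed
    then show ?thesis using False \<open>Max D \<in> D\<close> by (auto simp: D_def)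
  qed
  ultimately show ?thesis using L(1) ij(6) by (auto simp: D_def L')
qed

lemma prime_set_eq_prime_set_prime_set_iff:
  "prime_set L = prime_set (prime_set A) \<longleftrightarrow> A - L = {i} \<or> A - L = {j}"
proof -
  note ij = two_least_elements[OF fin card_ge_2_if_proper_nonempty[OF fin L]]
  define l0 where "l0 = Min L"
  have "finite L" using fin L(1) finite_subset by blast
  then have "l0 \<in> L" "\<And>x. x \<in> L \<Longrightarrow> l0 \<le> x" using L(2) by (simp_all add: l0_def)
  have L': "prime_set L = L - {l0}" by (simp add: prime_set_def ell_def l0_def)
  show ?thesis
  proof
    assume "prime_set L = prime_set (prime_set A)"
    then have "L - {l0} = A - {i, j}" using ij(6) by (simp add: L')
    then have l0: "l0 = i \<or> l0 = j" and L_eq: "L = insert l0 (A - {i, j})"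
      using \<open>l0 \<in> L\<close> L(1) by blast+
    have "A - L = {i, j} - {l0}" unfolding L_eq using ij(1,2) by auto
    then show "A - L = {i} \<or> A - L = {j}" using l0 ij(3) by (elim disjE) (simp_all add: insert_Diff_if)
  next
    assume "A - L = {i} \<or> A - L = {j}"
    then consider "L = A - {i}" | "L = A - {j}" using L(1) by auto
    then show "prime_set L = prime_set (prime_set A)"
    proof cases
      case 1
      then have "l0 = j" by (simp add: l0_def ell_def prime_set_def)
      have "L - {l0} = A - {i, j}" unfolding \<open>l0 = j\<close> 1 by blast
      then show ?thesis unfolding L' ij(6) .
    next
      case 2
      then have "l0 = i" unfolding l0_def using \<open>finite L\<close> ij(1,3,4) by (intro Min_eqI) auto
      have "L - {l0} = A - {i, j}" unfolding \<open>l0 = i\<close> 2 by blast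
      then show ?thesis unfolding L' ij(6) .
    qed
  qed
qed

end

lemma grevlex_le_xy_mon_prime_set:
  assumes "finite A" "L \<subset> A" "L \<noteq> {}"
  shows "grevlex_le (xy_mon A (prime_set L)) (xy_mon A (prime_set (prime_set A)))"
proof (cases "prime_set L = prime_set (prime_set A)")
  case False
  have "prime_set L \<subseteq> A" "prime_set (prime_set A) \<subseteq> A" using assms(2) by (auto simp: prime_set_def)
  with False have "grevlex_less (xy_mon A (prime_set L)) (xy_mon A (prime_set (prime_set A)))"
    by (intro grevlex_less_xy_mon assms(1) Max_sym_diff_prime_set_prime_set[OF assms])
  then show ?thesis by (simp add: grevlex_le_def)
qed (simp add: grevlex_le_def)

lemma lead_term_piQ_summand:
  assumes "CHAR('a::comm_semiring_1) = 2" "finite A" "L \<subset> A" "L \<noteq> {}"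
  defines "p \<equiv> piQ ((\<Prod>s\<in>A - L. Var (QX s)) * TrQ L :: (qvar,'a) mpoly)"
  shows "LM p = xy_mon A (prime_set L)" "LT p = Poly_Mapping.single (xy_mon A (prime_set L)) 1"
proof -
  define F where "F = Pow L - {L}"
  have "finite L" using assms(2,3) finite_subset by blast
  then have "finite F" by (simp add: F_def)
  have "F \<subseteq> Pow A" using assms(3) by (auto simp: F_def)
  then have "inj_on (xy_mon A) F" using inj_on_xy_mon[OF assms(2)] by (rule inj_on_subset[rotated])
  have "p = (\<Prod>s\<in>A - L. xS s) * tr L"
    unfolding p_def by (rule piQ_prod_QX_times_TrQ[OF assms(1)]) (use assms(2) in auto)
  also have "\<dots> = (\<Sum>T\<in>F. Poly_Mapping.single (xy_mon A T) 1)"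
    unfolding F_def using assms(1-3) by (intro prod_xS_times_tr) auto
  also have "\<dots> = indicator_pm (xy_mon A ` F)"
    using \<open>finite F\<close> \<open>inj_on (xy_mon A) F\<close> by (rule sum_single_one_inj_on)
  finally have p: "p = indicator_pm (xy_mon A ` F)" .
  have "Min L \<in> L" using \<open>finite L\<close> assms(4) by simp
  then have "prime_set L \<in> F" unfolding F_def prime_set_def ell_def by blast
  moreover have "grevlex_le (xy_mon A T) (xy_mon A (prime_set L))" if "T \<in> F" for T
  proof (cases "T = prime_set L")
    case False
    have "T \<subseteq> A" "T \<subset> L" using that \<open>F \<subseteq> Pow A\<close> unfolding F_def by blast+
    moreover have "prime_set L \<subseteq> A" using assms(3) unfolding prime_set_def by blast
    moreover have "Max (sym_diff T (prime_set L)) \<in> prime_set L"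
      using \<open>finite L\<close> \<open>T \<subset> L\<close> False by (rule Max_sym_diff_prime_set)
    ultimately have "grevlex_less (xy_mon A T) (xy_mon A (prime_set L))"
      using grevlex_less_xy_mon[OF assms(2)] False by blast
    then show ?thesis by (simp add: grevlex_le_def)
  qed (simp add: grevlex_le_def)
  moreover have "Poly_Mapping.keys p = xy_mon A ` F" using \<open>finite F\<close> by (simp add: p keys_indicator_pm)
  ultimately show LM: "LM p = xy_mon A (prime_set L)" by (intro LM_eqI) auto
  have "Poly_Mapping.lookup p (xy_mon A (prime_set L)) = 1"
    using \<open>finite F\<close> \<open>prime_set L \<in> F\<close> by (simp add: p lookup_indicator_pm)
  then show "LT p = Poly_Mapping.single (xy_mon A (prime_set L)) 1" by (simp add: LT_def LM)
qed

lemma single_one_eq_iff: "Poly_Mapping.single a (1::'b::zero_neq_one) = Poly_Mapping.single b 1 \<longleftrightarrow> a = b"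
  by (metis lookup_single_eq lookup_single_not_eq one_neq_zero)

lemma lead_term_piQ_summand_vs_target:
  assumes "CHAR('a::comm_semiring_1) = 2" "finite A" "L \<subset> A" "L \<noteq> {}"
  defines "p \<equiv> piQ ((\<Prod>s\<in>A - L. Var (QX s)) * TrQ L :: (qvar,'a) mpoly)"
  shows "grevlex_le (LM p) (xy_mon A (prime_set (prime_set A)))"
    and "LT p = Poly_Mapping.single (xy_mon A (prime_set (prime_set A))) 1
      \<longleftrightarrow> A - L = {ell A} \<or> A - L = {ell (prime_set A)}"
proof -
  show "grevlex_le (LM p) (xy_mon A (prime_set (prime_set A)))"
    unfolding p_def lead_term_piQ_summand[OF assms(1-4)]
    using assms(2-4) by (rule grevlex_le_xy_mon_prime_set)
  have "prime_set L \<in> Pow A" "prime_set (prime_set A) \<in> Pow A"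
    using assms(3) unfolding prime_set_def by blast+
  then have "xy_mon A (prime_set L) = xy_mon A (prime_set (prime_set A))
      \<longleftrightarrow> prime_set L = prime_set (prime_set A)"
    by (rule inj_on_eq_iff[OF inj_on_xy_mon[OF assms(2)]])
  then show "LT p = Poly_Mapping.single (xy_mon A (prime_set (prime_set A))) 1
      \<longleftrightarrow> A - L = {ell A} \<or> A - L = {ell (prime_set A)}"
    unfolding p_def lead_term_piQ_summand[OF assms(1-4)] single_one_eq_iff
    using prime_set_eq_prime_set_prime_set_iff[OF assms(2-4)] by simp
qed

lemma piQ_sum_proper_subsets_eq_0:
  assumes "CHAR('a::comm_semiring_1) = 2" "finite A" "A \<noteq> {}"
  shows "piQ ((\<Sum>L | L \<subset> A \<and> L \<noteq> {}. (\<Prod>s\<in>A - L. Var (QX s)) * TrQ L) :: (qvar,'a) mpoly) = 0"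
proof -
  have "piQ ((\<Sum>L | L \<subset> A \<and> L \<noteq> {}. (\<Prod>s\<in>A - L. Var (QX s)) * TrQ L) :: (qvar,'a) mpoly)
      = (\<Sum>L | L \<subset> A \<and> L \<noteq> {}. piQ ((\<Prod>s\<in>A - L. Var (QX s)) * TrQ L :: (qvar,'a) mpoly))"
    unfolding piQ_def by (rule subst_hom_sum)
  also have "\<dots> = (\<Sum>L | L \<subset> A \<and> L \<noteq> {}. (\<Prod>s\<in>A - L. xS s) * tr L)"
    using assms(2) by (intro sum.cong refl piQ_prod_QX_times_TrQ[OF assms(1)]) auto
  also have "\<dots> = 0" using assms by (rule sum_proper_subsets_prod_xS_times_tr_eq_0)
  finally show ?thesis .
qed

theorem mainTheorem2:
  fixes m :: nat and A :: "nat set"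
  assumes char2: "CHAR('a::field) = 2"
    and m: "m \<ge> 1"
    and A: "A \<subseteq> {1..m}" and cardA: "card A \<ge> 3"
  shows "piQ ((\<Sum>L | L \<subset> A \<and> L \<noteq> {}.
                 (\<Prod>s\<in>A - L. Var (QX s)) * TrQ L) :: (qvar, 'a) mpoly) = 0
    \<and> (let i = ell A; j = ell (prime_set A);
           target = xmon {i, j} + ymon (prime_set (prime_set A))
       in \<forall>L. L \<subset> A \<and> L \<noteq> {} \<longrightarrow>
            (let p = piQ ((\<Prod>s\<in>A - L. Var (QX s)) * TrQ L :: (qvar, 'a) mpoly)
             in grevlex_le (LM p) target \<and>
                (LT p = Poly_Mapping.single target 1 \<longleftrightarrow> A - L = {i} \<or> A - L = {j})))"
proof -
  have fin: "finite A" using A finite_subset by blast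
  have "A - prime_set (prime_set A) = {ell A, ell (prime_set A)}"
    using two_least_elements[OF fin] cardA by auto
  then have target: "xmon {ell A, ell (prime_set A)} + ymon (prime_set (prime_set A))
      = xy_mon A (prime_set (prime_set A))"
    by (simp add: xy_mon_def)
  have "A \<noteq> {}" using cardA by auto
  then show ?thesis
    unfolding Let_def target
    using piQ_sum_proper_subsets_eq_0[OF char2 fin] lead_term_piQ_summand_vs_target[OF char2 fin]
    by blast
qed

end
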